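(* Let $u_{nm}=2^{-m-1}$ for $0\le n\le m$, and let $U(x)=\sum_{0\le n\le m<\infty}u_{nm}L_{nm}(x)$ for $x\in[-1,1]\setminus D$. Then $$\int_0^1U(x)\,dx=\frac{4}{\sqrt3}-2\qquad\text{and}\qquad U\!\left(\tfrac13\right)=\operatorname*{ess\,sup}_{x\in[-1,1]}U(x)=\frac23.$$
   Context: Signed binary expansion: every $x\in[-1,1]$ can be written as $x=\sum_{n=0}^{\infty}x_n2^{-(n+1)}$ with digits $x_n\in\{-1,+1\}$; there is a countable set $D\subset[-1,1]$ (consisting of certain dyadic rationals) outside of which this expansion is unique. For $x\in[-1,1]\setminus D$ with digits $(x_n)_{n\ge0}$ and integers $0\le n\le m$, define the loop-counting function $L_{nm}(x)=1$ if $\sum_{j=n}^{m}x_j=0$ and $L_{nm}(x)=0$ otherwise. (Note $\tfrac13\notin D$: it has digits $+1,-1,+1,-1,\dots$.) *)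

theory Defs
  imports "HOL-Analysis.Analysis" "HOL-Probability.Essential_Supremum"
begin

definition signed_expansion :: "real \<Rightarrow> (nat \<Rightarrow> real) \<Rightarrow> bool" where
  "signed_expansion x d \<longleftrightarrow> (\<forall>n. d n \<in> {-1, 1}) \<and> (\<lambda>n. d n / 2 ^ (n + 1)) sums x"

definition D_exc :: "real set" where
  "D_exc = {x \<in> {-1..1}. \<not> (\<exists>!d. signed_expansion x d)}"

text \<open>The digit sequence (meaningful for x in [-1,1] outside D).\<close>
definition digits :: "real \<Rightarrow> nat \<Rightarrow> real" where
  "digits x = (THE d. signed_expansion x d)"

definition L :: "nat \<Rightarrow> nat \<Rightarrow> real \<Rightarrow> real" where
  "L n m x = (if (\<Sum>j=n..m. digits x j) = 0 then 1 else 0)"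

definition u :: "nat \<Rightarrow> nat \<Rightarrow> real" where
  "u n m = 1 / 2 ^ (m + 1)"

definition U :: "real \<Rightarrow> real" where
  "U x = (\<Sum>m. \<Sum>n\<le>m. u n m * L n m x)"

end

theory Submission
  imports Defs
begin

(* Off the countable set of dyadic rationals the signed digits are the greedy digits,
   produced by the doubling maps x |-> 2x - 1 on [0,1] and x |-> 2x + 1 on [-1,0], which
   push Lebesgue measure forward onto itself.  Hence the digits of a uniformly chosen point
   are independent fair signs, and the mean of L_nm is the probability that a simple random
   walk of m - n + 1 steps returns to 0, namely (2j choose j) / 4^j for length 2j.  Summing
   against u_nm and using the binomial series of (1 - 4t)^(-1/2) at t = 1/16 gives
   4/sqrt 3 - 2, by monotone convergence.
   A block of signs can only sum to 0 if its length is even, so level m contributes at most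
   floor((m+1)/2) / 2^(m+1); the alternating digits of 1/3 attain this bound at every level,
   and the bounds sum to 2/3.  Points near 1/3 share arbitrarily many leading digits with it,
   so U exceeds any value below 2/3 on an interval, and the essential supremum is 2/3. *)

section \<open>Integrals of nonnegative series and essential suprema\<close>

lemma has_integral_suminf_nonneg:
  fixes f :: "nat \<Rightarrow> 'a::euclidean_space \<Rightarrow> real"
  assumes int: "\<And>m. (f m has_integral a m) S"
    and nonneg: "\<And>m x. x \<in> S \<Longrightarrow> 0 \<le> f m x"
    and summable: "\<And>x. x \<in> S \<Longrightarrow> summable (\<lambda>m. f m x)"
    and sums: "a sums A"
  shows "((\<lambda>x. \<Sum>m. f m x) has_integral A) S"
proof -
  define P where "P K x = (\<Sum>m<K. f m x)" for K x
  have int_P: "(P K has_integral (\<Sum>m<K. a m)) S" for K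
    unfolding P_def[abs_def] by (rule has_integral_sum) (auto intro: int)
  have ints: "integral S (P K) = (\<Sum>m<K. a m)" for K
    using int_P by (rule integral_unique)
  have conv: "(\<lambda>K. \<Sum>m<K. a m) \<longlonglongrightarrow> A"
    using sums by (simp add: sums_def)
  then have "bounded (range (\<lambda>K. integral S (P K)))"
    unfolding ints by (metis Bseq_eq_bounded convergent_def convergent_imp_Bseq)
  moreover have "P K x \<le> P (Suc K) x" if "x \<in> S" for K x
    using nonneg[OF that] by (simp add: P_def)
  moreover have "(\<lambda>K. P K x) \<longlonglongrightarrow> (\<Sum>m. f m x)" if "x \<in> S" for x
    unfolding P_def by (rule summable_LIMSEQ[OF summable[OF that]])
  ultimately have mc: "(\<lambda>x. \<Sum>m. f m x) integrable_on S
      \<and> (\<lambda>K. integral S (P K)) \<longlonglongrightarrow> integral S (\<lambda>x. \<Sum>m. f m x)"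
    by (intro monotone_convergence_increasing has_integral_integrable[OF int_P])
  then have "integral S (\<lambda>x. \<Sum>m. f m x) = A"
    using conv unfolding ints by (metis LIMSEQ_unique)
  then show ?thesis
    using mc integrable_integral by fastforce
qed

lemma ereal_le_esssup_lebesgue_on:
  fixes f :: "real \<Rightarrow> real"
  assumes S: "S \<in> sets lebesgue" and N: "negligible N"
    and ab: "a < b" "{a..b} \<subseteq> S" and above: "\<And>x. x \<in> {a..b} - N \<Longrightarrow> z < f x"
  shows "ereal z \<le> esssup (lebesgue_on S) (\<lambda>x. ereal (f x))"
proof (rule ccontr)
  assume "\<not> ereal z \<le> esssup (lebesgue_on S) (\<lambda>x. ereal (f x))"
  then have less: "esssup (lebesgue_on S) (\<lambda>x. ereal (f x)) < ereal z"
    by simp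
  have "AE x in lebesgue_on S. f x < z"
  proof (rule eventually_mono[OF esssup_AE])
    fix x
    assume "ereal (f x) \<le> esssup (lebesgue_on S) (\<lambda>x. ereal (f x))"
    then have "ereal (f x) < ereal z"
      using less by (rule order_le_less_trans)
    then show "f x < z"
      by simp
  qed
  then obtain N' where N': "{x \<in> space (lebesgue_on S). \<not> f x < z} \<subseteq> N'"
      "emeasure (lebesgue_on S) N' = 0" "N' \<in> sets (lebesgue_on S)"
    by (rule AE_E)
  have "N' \<in> null_sets (lebesgue_on S)"
    using N'(2,3) by blast
  then have "negligible N'"
    using null_sets_restrict_space[OF S] negligible_iff_null_sets by blast
  then have "negligible (N' \<union> N)"
    using N by (rule negligible_Un)
  moreover have "{a..b} \<subseteq> N' \<union> N"
  proof
    fix x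
    assume x: "x \<in> {a..b}"
    show "x \<in> N' \<union> N"
    proof (cases "x \<in> N")
      case False
      then have "z < f x"
        using x above by blast
      then have "x \<in> {x \<in> space (lebesgue_on S). \<not> f x < z}"
        using x ab(2) by auto
      then show ?thesis
        using N'(1) by blast
    qed simp
  qed
  ultimately have "negligible {a..b}"
    by (rule negligible_subset)
  moreover have "box a b \<noteq> {}"
    using ab(1) by (simp add: box_real)
  ultimately show False
    using negligible_interval(1)[of a b] by (simp add: cbox_interval)
qed

lemma esssup_lebesgue_on_eqI:
  fixes f :: "real \<Rightarrow> real"
  assumes S: "S \<in> sets lebesgue" and meas: "f \<in> borel_measurable (lebesgue_on S)"
    and N: "negligible N"
    and le: "\<And>x. x \<in> S - N \<Longrightarrow> f x \<le> c"
    and near: "\<And>z. z < c \<Longrightarrow> \<exists>a b. a < b \<and> {a..b} \<subseteq> S \<and> (\<forall>x \<in> {a..b} - N. z < f x)"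
  shows "esssup (lebesgue_on S) (\<lambda>x. ereal (f x)) = ereal c"
proof (rule antisym)
  have "N \<inter> S \<in> null_sets (lebesgue_on S)"
    using negligible_subset[OF N] null_sets_restrict_space[OF S] negligible_iff_null_sets by blast
  then have "AE x in lebesgue_on S. ereal (f x) \<le> ereal c"
    by (rule AE_I') (auto intro: le)
  then show "esssup (lebesgue_on S) (\<lambda>x. ereal (f x)) \<le> ereal c"
    by (intro esssup_I borel_measurable_ereal meas)
  show "ereal c \<le> esssup (lebesgue_on S) (\<lambda>x. ereal (f x))"
  proof (rule ccontr)
    assume "\<not> ereal c \<le> esssup (lebesgue_on S) (\<lambda>x. ereal (f x))"
    then have "esssup (lebesgue_on S) (\<lambda>x. ereal (f x)) < ereal c"
      by simp
    then obtain z where z: "esssup (lebesgue_on S) (\<lambda>x. ereal (f x)) < ereal z" "ereal z < ereal c"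
      using ereal_dense2 by blast
    then have "z < c"
      by simp
    then obtain a b where "a < b" "{a..b} \<subseteq> S" and above: "\<forall>x \<in> {a..b} - N. z < f x"
      using near by blast
    then have "ereal z \<le> esssup (lebesgue_on S) (\<lambda>x. ereal (f x))"
      using ereal_le_esssup_lebesgue_on[OF S N] by blast
    with z(1) show False
      by simp
  qed
qed

lemma has_integral_double_shift:
  fixes \<phi> :: "real \<Rightarrow> real"
  assumes "(\<phi> has_integral I) {-1..1}"
  shows "((\<lambda>x. \<phi> (2 * x - s)) has_integral I / 2) {(s - 1) / 2..(s + 1) / 2}"
  using has_integral_affinity'[of \<phi> I "-1" 1 2 "-s"] assms by (simp add: field_simps)

section \<open>Greedy signed digits\<close>

fun greedy_digit :: "real \<Rightarrow> nat \<Rightarrow> real" where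
  "greedy_digit x 0 = (if x < 0 then -1 else 1)"
| "greedy_digit x (Suc n) = greedy_digit (2 * x - (if x < 0 then -1 else 1)) n"

lemma greedy_digit_pm: "greedy_digit x n \<in> {-1, 1}"
  by (induction n arbitrary: x) auto

lemma greedy_digit_Suc: "greedy_digit x (Suc n) = greedy_digit (2 * x - greedy_digit x 0) n"
  by simp

declare greedy_digit.simps(2) [simp del]

lemma greedy_digit_tail_nonneg:
  "0 \<le> x \<Longrightarrow> (\<lambda>n. greedy_digit x (Suc n)) = greedy_digit (2 * x - 1)"
  by (simp add: fun_eq_iff greedy_digit_Suc)

lemma greedy_digit_tail_neg:
  "x < 0 \<Longrightarrow> (\<lambda>n. greedy_digit x (Suc n)) = greedy_digit (2 * x + 1)"
  by (simp add: fun_eq_iff greedy_digit_Suc)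

lemma greedy_digit_partial_sum_error:
  "x \<in> {-1..1} \<Longrightarrow> \<bar>x - (\<Sum>n<N. greedy_digit x n / 2 ^ (n + 1))\<bar> \<le> 1 / 2 ^ N"
proof (induction N arbitrary: x)
  case 0
  then show ?case by auto
next
  case (Suc N)
  define y where "y = 2 * x - greedy_digit x 0"
  have y: "y \<in> {-1..1}"
    using Suc.prems by (auto simp: y_def)
  have "(\<Sum>n<Suc N. greedy_digit x n / 2 ^ (n + 1))
      = greedy_digit x 0 / 2 + (\<Sum>n<N. greedy_digit x (Suc n) / 2 ^ (Suc n + 1))"
    by (subst sum.lessThan_Suc_shift) simp
  also have "(\<Sum>n<N. greedy_digit x (Suc n) / 2 ^ (Suc n + 1))
      = (\<Sum>n<N. greedy_digit y n / 2 ^ (n + 1)) / 2"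
    by (simp add: greedy_digit_Suc y_def sum_divide_distrib)
  finally have "(\<Sum>n<Suc N. greedy_digit x n / 2 ^ (n + 1))
      = greedy_digit x 0 / 2 + (\<Sum>n<N. greedy_digit y n / 2 ^ (n + 1)) / 2" .
  then have "x - (\<Sum>n<Suc N. greedy_digit x n / 2 ^ (n + 1))
      = (y - (\<Sum>n<N. greedy_digit y n / 2 ^ (n + 1))) / 2"
    by (simp add: y_def field_simps)
  then show ?case
    using Suc.IH[OF y] by simp
qed

lemma greedy_digit_sums:
  assumes "x \<in> {-1..1}"
  shows "(\<lambda>n. greedy_digit x n / 2 ^ (n + 1)) sums x"
proof -
  have "(\<lambda>N. x - (\<Sum>n<N. greedy_digit x n / 2 ^ (n + 1))) \<longlonglongrightarrow> 0"
  proof (rule Lim_null_comparison)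
    show "\<forall>\<^sub>F N in sequentially. norm (x - (\<Sum>n<N. greedy_digit x n / 2 ^ (n + 1))) \<le> (1 / 2) ^ N"
      using greedy_digit_partial_sum_error[OF assms] by (simp add: power_one_over)
  qed (rule LIMSEQ_power_zero, simp)
  then have "(\<lambda>N. x - (x - (\<Sum>n<N. greedy_digit x n / 2 ^ (n + 1)))) \<longlonglongrightarrow> x - 0"
    by (intro tendsto_diff tendsto_const)
  then show ?thesis
    by (simp add: sums_def)
qed

lemma signed_expansion_greedy_digit: "x \<in> {-1..1} \<Longrightarrow> signed_expansion x (greedy_digit x)"
  unfolding signed_expansion_def using greedy_digit_sums greedy_digit_pm by auto

definition dyadic :: "real set" where
  "dyadic = {x. \<exists>k::nat. \<exists>z::int. x = of_int z / 2 ^ k}"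

lemma countable_dyadic: "countable dyadic"
proof -
  have "dyadic = (\<lambda>(k, z). of_int z / 2 ^ k) ` (UNIV :: (nat \<times> int) set)"
    unfolding dyadic_def by auto
  then show ?thesis
    by (metis countable_image countableI_type)
qed

lemma negligible_dyadic: "negligible dyadic"
  by (simp add: negligible_iff_null_sets null_sets_completionI countable_imp_null_set_lborel
      countable_dyadic)

lemma zero_in_dyadic: "0 \<in> dyadic"
  unfolding dyadic_def by (auto intro!: exI[of _ 0])

lemma double_minus_digit_notin_dyadic:
  assumes "x \<notin> dyadic" "e \<in> {-1, 1}"
  shows "2 * x - e \<notin> dyadic"
proof
  assume "2 * x - e \<in> dyadic"
  then obtain k z where kz: "2 * x - e = of_int z / 2 ^ k"
    by (auto simp: dyadic_def)
  obtain w :: int where w: "e = of_int w"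
    using assms(2) by (metis insertE of_int_1 of_int_minus singletonD)
  have "x = of_int (z + w * 2 ^ k) / 2 ^ Suc k"
    using kz by (simp add: w field_simps)
  then show False
    using assms(1) unfolding dyadic_def by blast
qed

lemma signed_expansion_shift:
  assumes "signed_expansion x d"
  shows "signed_expansion (2 * x - d 0) (\<lambda>n. d (Suc n))"
proof -
  have "(\<lambda>n. d n / 2 ^ (n + 1)) sums x"
    using assms by (simp add: signed_expansion_def)
  then have "(\<lambda>n. d (Suc n) / 2 ^ (Suc n + 1)) sums (x - d 0 / 2)"
    using sums_Suc_iff[of "\<lambda>n. d n / 2 ^ (n + 1)" "x - d 0 / 2"] by simp
  then have "(\<lambda>n. 2 * (d (Suc n) / 2 ^ (Suc n + 1))) sums (2 * (x - d 0 / 2))"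
    by (rule sums_mult)
  then show ?thesis
    using assms by (simp add: signed_expansion_def algebra_simps)
qed

lemma signed_expansion_bounds:
  assumes "signed_expansion x d"
  shows "-1 \<le> x \<and> x \<le> 1"
proof -
  have s: "(\<lambda>n. d n / 2 ^ (n + 1)) sums x" and pm: "\<And>n. d n \<in> {-1, 1}"
    using assms by (auto simp: signed_expansion_def)
  have g: "(\<lambda>n. (1 / 2 :: real) ^ Suc n) sums 1"
    by (rule power_half_series)
  have le: "d n / 2 ^ (n + 1) \<le> (1 / 2) ^ Suc n" and ge: "- ((1 / 2) ^ Suc n) \<le> d n / 2 ^ (n + 1)"
    for n
    using pm[of n] by (auto simp: power_one_over)
  show ?thesis
    using sums_le[OF le s g] sums_le[OF ge sums_minus[OF g] s] by simp
qed

lemma signed_expansion_first_digit: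
  assumes "signed_expansion x d" "x \<notin> dyadic"
  shows "d 0 = greedy_digit x 0"
proof -
  have "-1 \<le> 2 * x - d 0 \<and> 2 * x - d 0 \<le> 1"
    using signed_expansion_bounds[OF signed_expansion_shift[OF assms(1)]] .
  moreover have "d 0 \<in> {-1, 1}" "x \<noteq> 0"
    using assms zero_in_dyadic by (auto simp: signed_expansion_def)
  ultimately show ?thesis
    by auto
qed

lemma signed_expansion_unique:
  assumes "signed_expansion x d" "x \<notin> dyadic"
  shows "d n = greedy_digit x n"
  using assms
proof (induction n arbitrary: x d)
  case 0
  then show ?case
    by (rule signed_expansion_first_digit)
next
  case (Suc n)
  have "d 0 \<in> {-1, 1}"
    using Suc.prems by (simp add: signed_expansion_def)
  then have "d (Suc n) = greedy_digit (2 * x - d 0) n"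
    using Suc.IH[OF signed_expansion_shift[OF Suc.prems(1)]] double_minus_digit_notin_dyadic Suc.prems(2)
    by blast
  then show ?case
    using signed_expansion_first_digit[OF Suc.prems] by (simp add: greedy_digit_Suc)
qed

lemma digits_eq_greedy_digit:
  assumes "x \<in> {-1..1}" "x \<notin> dyadic"
  shows "digits x = greedy_digit x"
  unfolding digits_def
proof (rule the_equality)
  show "signed_expansion x (greedy_digit x)"
    using signed_expansion_greedy_digit assms by blast
  show "\<And>d. signed_expansion x d \<Longrightarrow> d = greedy_digit x"
    using signed_expansion_unique assms by blast
qed

section \<open>Loops of a sign sequence\<close>

definition loop_indicator :: "(nat \<Rightarrow> real) \<Rightarrow> nat \<Rightarrow> nat \<Rightarrow> real" where
  "loop_indicator d n m = (if (\<Sum>j=n..m. d j) = 0 then 1 else 0)"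

definition loop_mass :: "(nat \<Rightarrow> real) \<Rightarrow> nat \<Rightarrow> real" where
  "loop_mass d m = (\<Sum>n\<le>m. u n m * loop_indicator d n m)"

definition loop_series :: "(nat \<Rightarrow> real) \<Rightarrow> real" where
  "loop_series d = (\<Sum>m. loop_mass d m)"

lemma U_eq_loop_series: "U x = loop_series (digits x)"
  by (simp add: U_def loop_series_def loop_mass_def L_def loop_indicator_def)

lemma sum_atLeastAtMost_eq_sum_lessThan:
  "n \<le> m \<Longrightarrow> (\<Sum>j=n..m. d j) = (\<Sum>j<Suc (m - n). d (n + j))"
  by (simp add: sum.atLeastAtMost_shift_0 atLeast0AtMost lessThan_Suc_atMost comp_def)

lemma sum_pm_one_eq:
  fixes f :: "nat \<Rightarrow> real"
  assumes "\<And>j. j < k \<Longrightarrow> f j \<in> {-1, 1}"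
  shows "\<exists>i\<le>k. (\<Sum>j<k. f j) = 2 * real i - real k"
  using assms
proof (induction k)
  case 0
  then show ?case by simp
next
  case (Suc k)
  then obtain i where i: "i \<le> k" "(\<Sum>j<k. f j) = 2 * real i - real k"
    by force
  consider "f k = -1" | "f k = 1"
    using Suc.prems[of k] by auto
  then show ?case
  proof cases
    case 1
    then show ?thesis using i by (intro exI[of _ i]) auto
  next
    case 2
    then show ?thesis using i by (intro exI[of _ "Suc i"]) auto
  qed
qed

lemma even_if_sum_pm_one_eq_zero:
  fixes f :: "nat \<Rightarrow> real"
  assumes "\<And>j. j < k \<Longrightarrow> f j \<in> {-1, 1}" "(\<Sum>j<k. f j) = 0"
  shows "even k"
proof -
  obtain i where "(\<Sum>j<k. f j) = 2 * real i - real k"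
    using sum_pm_one_eq assms(1) by blast
  with assms(2) have "k = 2 * i"
    by linarith
  then show ?thesis
    by simp
qed

definition alternating :: "nat \<Rightarrow> real" where
  "alternating n = (-1) ^ n"

lemma loop_indicator_le:
  assumes "\<And>j. d j \<in> {-1, 1}" "n \<le> m"
  shows "loop_indicator d n m \<le> (if odd (m - n) then 1 else 0)"
proof (cases "(\<Sum>j=n..m. d j) = 0")
  case True
  then have "(\<Sum>j<Suc (m - n). d (n + j)) = 0"
    by (simp add: sum_atLeastAtMost_eq_sum_lessThan[OF assms(2)])
  then have "even (Suc (m - n))"
    using even_if_sum_pm_one_eq_zero[of "Suc (m - n)" "\<lambda>j. d (n + j)"] assms(1) by blast
  then show ?thesis
    by (simp add: loop_indicator_def)
qed (simp add: loop_indicator_def)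

lemma loop_indicator_alternating:
  assumes "n \<le> m"
  shows "loop_indicator alternating n m = (if odd (m - n) then 1 else 0)"
proof -
  have "(\<Sum>j<k. alternating (n + j)) = (if even k then 0 else alternating n)" for k
    by (induction k) (auto simp: alternating_def power_add)
  then show ?thesis
    by (simp add: loop_indicator_def sum_atLeastAtMost_eq_sum_lessThan[OF assms] alternating_def)
qed

definition max_loop_mass :: "nat \<Rightarrow> real" where
  "max_loop_mass m = real ((m + 1) div 2) / 2 ^ (m + 1)"

lemma loop_mass_alternating: "loop_mass alternating m = max_loop_mass m"
proof -
  have odd_count: "(\<Sum>i\<le>m. if odd i then 1 else 0 :: real) = real ((m + 1) div 2)" for m
  proof (induction m)
    case (Suc m)
    have "(Suc m + 1) div 2 = (m + 1) div 2 + (if odd (Suc m) then 1 else 0)"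
      by presburger
    then show ?case
      using Suc by simp
  qed simp
  have "loop_mass alternating m = (\<Sum>n\<le>m. if odd (m - n) then 1 else 0) / 2 ^ (m + 1)"
    by (simp add: loop_mass_def u_def loop_indicator_alternating sum_divide_distrib)
  also have "(\<Sum>n\<le>m. if odd (m - n) then 1 else 0 :: real) = (\<Sum>n\<le>m. if odd n then 1 else 0)"
    using sum.atLeastAtMost_rev[of "\<lambda>n. if odd (m - n) then 1 else 0 :: real" 0 m]
    by (simp add: atLeast0AtMost)
  finally show ?thesis
    by (simp add: odd_count max_loop_mass_def)
qed

lemma loop_mass_nonneg: "0 \<le> loop_mass d m"
  unfolding loop_mass_def by (rule sum_nonneg) (simp add: u_def loop_indicator_def)

lemma loop_mass_le_max:
  assumes "\<And>j. d j \<in> {-1, 1}"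
  shows "loop_mass d m \<le> max_loop_mass m"
proof -
  have "loop_mass d m \<le> loop_mass alternating m"
    unfolding loop_mass_def
  proof (rule sum_mono)
    fix n
    assume "n \<in> {..m}"
    then have "loop_indicator d n m \<le> loop_indicator alternating n m"
      using loop_indicator_le[OF assms] loop_indicator_alternating by simp
    then show "u n m * loop_indicator d n m \<le> u n m * loop_indicator alternating n m"
      by (rule mult_left_mono) (simp add: u_def)
  qed
  then show ?thesis
    by (simp add: loop_mass_alternating)
qed

lemma max_loop_mass_sums: "max_loop_mass sums (2 / 3)"
proof -
  \<comment> \<open>The tail sum of max_loop_mass from m onwards, in closed form.\<close>
  define g where "g m = (real m / 2 + 3 / 4 - (-1) ^ m / 12) / 2 ^ m" for m
  have lim: "g \<longlonglongrightarrow> 0"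
  proof (rule Lim_null_comparison)
    have "\<bar>real m / 2 + 3 / 4 - (-1) ^ m / 12\<bar> \<le> real m + 1" for m
      by (cases "even m") auto
    then show "\<forall>\<^sub>F m in sequentially. norm (g m) \<le> (real m + 1) / 2 ^ m"
      by (intro always_eventually allI) (simp add: g_def abs_divide divide_right_mono)
  qed real_asymp
  have telescope: "(\<lambda>m. g m - g (Suc m)) sums (g 0 - 0)"
    by (rule telescope_sums'[OF lim])
  have g0: "g 0 = 2 / 3"
    by (simp add: g_def)
  have step: "g m - g (Suc m) = max_loop_mass m" for m
  proof (cases "even m")
    case True
    then obtain j where m: "m = 2 * j" by blast
    have "(2 * j + 1) div 2 = j" by presburger
    then show ?thesis by (simp add: g_def max_loop_mass_def m field_simps power_add)
  next
    case False
    then obtain j where m: "m = 2 * j + 1" using oddE by blast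
    have "(2 * j + 2) div 2 = j + 1" by presburger
    then show ?thesis by (simp add: g_def max_loop_mass_def m field_simps power_add)
  qed
  show ?thesis
    using telescope by (simp only: step g0 diff_zero)
qed

lemma summable_loop_mass:
  assumes "\<And>j. d j \<in> {-1, 1}"
  shows "summable (loop_mass d)"
  by (rule summable_comparison_test'[OF sums_summable[OF max_loop_mass_sums]])
    (use loop_mass_le_max[OF assms] loop_mass_nonneg in auto)

lemma loop_series_le:
  assumes "\<And>j. d j \<in> {-1, 1}"
  shows "loop_series d \<le> 2 / 3"
proof -
  have "loop_series d \<le> suminf max_loop_mass"
    unfolding loop_series_def
    by (rule suminf_le[OF loop_mass_le_max[OF assms] summable_loop_mass[OF assms]
          sums_summable[OF max_loop_mass_sums]])
  then show ?thesis
    using max_loop_mass_sums sums_unique by fastforce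
qed

lemma loop_series_alternating: "loop_series alternating = 2 / 3"
  using max_loop_mass_sums by (simp add: loop_series_def loop_mass_alternating sums_iff)

lemma sum_loop_mass_le_loop_series:
  assumes "\<And>j. d j \<in> {-1, 1}"
  shows "(\<Sum>m<M. loop_mass d m) \<le> loop_series d"
  unfolding loop_series_def
  by (rule sum_le_suminf[OF summable_loop_mass[OF assms]]) (auto simp: loop_mass_nonneg)

lemma loop_mass_cong:
  assumes "\<And>j. j \<le> m \<Longrightarrow> d j = e j"
  shows "loop_mass d m = loop_mass e m"
  unfolding loop_mass_def loop_indicator_def using assms by (auto intro!: sum.cong)

section \<open>Points near 1/3\<close>

lemma greedy_digit_third:
  "greedy_digit (1 / 3) n = alternating n \<and> greedy_digit (- 1 / 3) n = - alternating n"
proof (induction n)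
  case (Suc n)
  have "2 * (1 / 3 :: real) - 1 = - 1 / 3" "2 * (- 1 / 3 :: real) + 1 = 1 / 3"
    by simp_all
  with Suc show ?case
    by (simp add: greedy_digit_Suc alternating_def)
qed (simp add: alternating_def)

lemma greedy_digit_near_third:
  assumes "y = 1 / 3 \<or> y = - 1 / 3" "\<bar>x - y\<bar> < 1 / (3 * 2 ^ M)" "n \<le> M"
  shows "greedy_digit x n = greedy_digit y n"
  using assms
proof (induction M arbitrary: x y n)
  case 0
  then show ?case
    by (auto simp: abs_less_iff)
next
  case (Suc M)
  have "1 / (3 * 2 ^ Suc M) \<le> (1 / 3 :: real)"
    using one_le_power[of "2 :: real" "Suc M"] by (simp add: field_simps)
  then have "\<bar>x - y\<bar> < 1 / 3"
    using Suc.prems(2) by linarith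
  then have "-1 / 3 < x - y \<and> x - y < 1 / 3"
    using abs_less_iff[of "x - y" "1 / 3"] by linarith
  then have same_sign: "(x < 0) = (y < 0)"
    using Suc.prems(1) by auto
  define s where "s = (if y < 0 then -1 else 1 :: real)"
  have "\<bar>(2 * x - s) - (2 * y - s)\<bar> = 2 * \<bar>x - y\<bar>"
    by (simp add: abs_if)
  with Suc.prems(2) have "\<bar>(2 * x - s) - (2 * y - s)\<bar> < 1 / (3 * 2 ^ M)"
    by simp
  moreover have "2 * y - s = 1 / 3 \<or> 2 * y - s = - 1 / 3"
    using Suc.prems(1) by (auto simp: s_def)
  ultimately have "greedy_digit (2 * x - s) k = greedy_digit (2 * y - s) k" if "k \<le> M" for k
    using Suc.IH that by blast
  with Suc.prems(3) same_sign show ?case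
    by (cases n) (auto simp: greedy_digit.simps s_def)
qed

lemma power_two_mod_three: "(2 :: int) ^ k mod 3 \<in> {1, 2}"
proof (induction k)
  case (Suc k)
  have "(2 :: int) ^ Suc k mod 3 = (2 * (2 ^ k mod 3)) mod 3"
    by (simp add: mod_mult_right_eq)
  with Suc show ?case
    by auto
qed simp

lemma third_notin_dyadic: "1 / 3 \<notin> dyadic"
proof
  assume "1 / 3 \<in> dyadic"
  then obtain k z where "1 / 3 = real_of_int z / 2 ^ k"
    by (auto simp: dyadic_def)
  then have "real_of_int (2 ^ k) = real_of_int (3 * z)"
    by (simp add: field_simps)
  then have "(2 :: int) ^ k = 3 * z"
    using of_int_eq_iff by blast
  then show False
    using power_two_mod_three[of k] by simp
qed

lemma loop_series_near_third:
  assumes "z < 2 / 3"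
  obtains a b where "a < b" "{a..b} \<subseteq> {-1..1}"
    "\<And>x. x \<in> {a..b} \<Longrightarrow> z < loop_series (greedy_digit x)"
proof -
  have "(\<lambda>M. \<Sum>m<M. max_loop_mass m) \<longlonglongrightarrow> 2 / 3"
    using max_loop_mass_sums by (simp add: sums_def)
  then have "\<forall>\<^sub>F M in sequentially. z < (\<Sum>m<M. max_loop_mass m)"
    using assms by (rule order_tendstoD)
  then obtain M where M: "z < (\<Sum>m<M. max_loop_mass m)"
    by (meson eventually_sequentially order_refl)
  define \<delta> where "\<delta> = 1 / (6 * 2 ^ M :: real)"
  have "(1 :: real) \<le> 2 ^ M"
    by (rule one_le_power) simp
  then have "\<delta> \<le> 2 / 3"
    by (simp add: \<delta>_def field_simps) (use \<open>(1 :: real) \<le> 2 ^ M\<close> in linarith)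
  have "0 < \<delta>" "\<delta> < 1 / (3 * 2 ^ M)"
    by (simp_all add: \<delta>_def field_simps)
  show ?thesis
  proof (rule that[of "1 / 3 - \<delta>" "1 / 3 + \<delta>"])
    fix x
    assume "x \<in> {1 / 3 - \<delta>..1 / 3 + \<delta>}"
    then have "\<bar>x - 1 / 3\<bar> < 1 / (3 * 2 ^ M)"
      using \<open>\<delta> < 1 / (3 * 2 ^ M)\<close> by (auto simp: abs_le_iff)
    then have "greedy_digit x j = alternating j" if "j \<le> M" for j
      using greedy_digit_near_third[of "1 / 3" x M j] greedy_digit_third that by simp
    then have "loop_mass (greedy_digit x) m = max_loop_mass m" if "m < M" for m
      unfolding loop_mass_alternating[symmetric] using that by (intro loop_mass_cong) simp
    then have "(\<Sum>m<M. max_loop_mass m) = (\<Sum>m<M. loop_mass (greedy_digit x) m)"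
      by simp
    also have "\<dots> \<le> loop_series (greedy_digit x)"
      by (rule sum_loop_mass_le_loop_series) (rule greedy_digit_pm)
    finally show "z < loop_series (greedy_digit x)"
      using M by simp
  qed (use \<open>0 < \<delta>\<close> \<open>\<delta> \<le> 2 / 3\<close> in simp_all)
qed

lemma U_third: "U (1 / 3) = 2 / 3"
proof -
  have "digits (1 / 3) = greedy_digit (1 / 3)"
    by (rule digits_eq_greedy_digit) (auto simp: third_notin_dyadic)
  moreover have "greedy_digit (1 / 3) = alternating"
    using greedy_digit_third by auto
  ultimately show ?thesis
    by (simp add: U_eq_loop_series loop_series_alternating)
qed

section \<open>Integrals of functions of the digits\<close>

lemma has_integral_digit_tail_right:
  fixes \<phi> :: "(nat \<Rightarrow> real) \<Rightarrow> real"
  assumes "((\<lambda>x. \<phi> (greedy_digit x)) has_integral I) {-1..1}"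
    and "\<And>x. x \<in> {0..1} \<Longrightarrow> g x = \<phi> (\<lambda>n. greedy_digit x (Suc n))"
  shows "(g has_integral I / 2) {0..1}"
proof -
  have shifted: "((\<lambda>x. \<phi> (greedy_digit (2 * x - 1))) has_integral I / 2) {0..1}"
    using has_integral_double_shift[OF assms(1), of 1] by simp
  have tail: "g x = \<phi> (greedy_digit (2 * x - 1))" if "x \<in> {0..1} - {}" for x
    using that assms(2) greedy_digit_tail_nonneg by simp
  show ?thesis
    by (rule has_integral_spike_finite[where S = "{}", OF _ tail shifted]) simp
qed

lemma has_integral_digit_tail_left:
  fixes \<phi> :: "(nat \<Rightarrow> real) \<Rightarrow> real"
  assumes "((\<lambda>x. \<phi> (greedy_digit x)) has_integral I) {-1..1}"
    and "\<And>x. x \<in> {-1..<0} \<Longrightarrow> g x = \<phi> (\<lambda>n. greedy_digit x (Suc n))"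
  shows "(g has_integral I / 2) {-1..0}"
proof -
  have shifted: "((\<lambda>x. \<phi> (greedy_digit (2 * x + 1))) has_integral I / 2) {-1..0}"
    using has_integral_double_shift[OF assms(1), of "-1"] by simp
  have tail: "g x = \<phi> (greedy_digit (2 * x + 1))" if "x \<in> {-1..0} - {0}" for x
    using that assms(2) greedy_digit_tail_neg by simp
  show ?thesis
    by (rule has_integral_spike_finite[where S = "{0}", OF _ tail shifted]) simp
qed

lemma has_integral_digit_tail:
  fixes \<phi> :: "(nat \<Rightarrow> real) \<Rightarrow> real"
  assumes "((\<lambda>x. \<phi> (greedy_digit x)) has_integral I) {-1..1}"
  shows "((\<lambda>x. \<phi> (\<lambda>n. greedy_digit x (Suc n))) has_integral I) {-1..1}"
proof -
  have "((\<lambda>x. \<phi> (\<lambda>n. greedy_digit x (Suc n))) has_integral I / 2 + I / 2) {-1..1}"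
    by (rule has_integral_combine[OF _ _ has_integral_digit_tail_left[OF assms]
          has_integral_digit_tail_right[OF assms]]) simp_all
  then show ?thesis
    by simp
qed

fun walk_prob :: "nat \<Rightarrow> real \<Rightarrow> real" where
  "walk_prob 0 c = (if c = 0 then 1 else 0)"
| "walk_prob (Suc k) c = (walk_prob k (c - 1) + walk_prob k (c + 1)) / 2"

lemma has_integral_prefix_sum_indicator:
  "((\<lambda>x. if (\<Sum>j<k. greedy_digit x j) = c then 1 else 0) has_integral 2 * walk_prob k c) {-1..1}"
proof (induction k arbitrary: c)
  case 0
  show ?case
    using has_integral_const_real[of "if 0 = c then 1 else 0 :: real" "-1" 1] by simp
next
  case (Suc k)
  have split: "(\<Sum>j<Suc k. greedy_digit x j) = greedy_digit x 0 + (\<Sum>j<k. greedy_digit x (Suc j))" for x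
    by (rule sum.lessThan_Suc_shift)
  have "((\<lambda>x. if (\<Sum>j<Suc k. greedy_digit x j) = c then 1 else 0)
      has_integral 2 * walk_prob k (c + 1) / 2) {-1..0}"
    by (rule has_integral_digit_tail_left[OF Suc.IH[of "c + 1"]]) (unfold split, auto)
  moreover have "((\<lambda>x. if (\<Sum>j<Suc k. greedy_digit x j) = c then 1 else 0)
      has_integral 2 * walk_prob k (c - 1) / 2) {0..1}"
    by (rule has_integral_digit_tail_right[OF Suc.IH[of "c - 1"]]) (unfold split, auto)
  ultimately have "((\<lambda>x. if (\<Sum>j<Suc k. greedy_digit x j) = c then 1 else 0)
      has_integral 2 * walk_prob k (c + 1) / 2 + 2 * walk_prob k (c - 1) / 2) {-1..1}"
    by (rule has_integral_combine[rotated 2]) simp_all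
  moreover have "2 * walk_prob k (c + 1) / 2 + 2 * walk_prob k (c - 1) / 2 = 2 * walk_prob (Suc k) c"
    by simp
  ultimately show ?case
    by (simp only:)
qed

lemma has_integral_window_sum_indicator:
  "((\<lambda>x. if (\<Sum>j<k. greedy_digit x (s + j)) = c then 1 else 0) has_integral 2 * walk_prob k c) {-1..1}"
proof (induction s)
  case 0
  then show ?case
    using has_integral_prefix_sum_indicator by simp
next
  case (Suc s)
  have "((\<lambda>x. (\<lambda>d. if (\<Sum>j<k. d (s + j)) = c then 1 else 0) (\<lambda>n. greedy_digit x (Suc n)))
      has_integral 2 * walk_prob k c) {-1..1}"
    by (rule has_integral_digit_tail) (use Suc.IH in simp)
  then show ?case
    by simp
qed

lemma walk_prob_uminus: "walk_prob k (- c) = walk_prob k c"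
proof (induction k arbitrary: c)
  case (Suc k)
  have "walk_prob (Suc k) (- c) = (walk_prob k (- (c + 1)) + walk_prob k (- (c - 1))) / 2"
    by simp
  also have "\<dots> = walk_prob (Suc k) c"
    by (simp only: Suc.IH) simp
  finally show ?case .
qed simp

lemma walk_prob_bounds: "0 \<le> walk_prob k c \<and> walk_prob k c \<le> 1"
proof (induction k arbitrary: c)
  case (Suc k)
  have "0 \<le> walk_prob k (c - 1)" "walk_prob k (c - 1) \<le> 1"
    "0 \<le> walk_prob k (c + 1)" "walk_prob k (c + 1) \<le> 1"
    using Suc.IH[of "c - 1"] Suc.IH[of "c + 1"] by auto
  then show ?case
    by simp
qed simp

declare walk_prob.simps(2) [simp del]

lemma has_integral_loop_indicator:
  assumes "n \<le> m"
  shows "((\<lambda>x. loop_indicator (greedy_digit x) n m) has_integral 2 * walk_prob (Suc (m - n)) 0) {-1..1}"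
  unfolding loop_indicator_def sum_atLeastAtMost_eq_sum_lessThan[OF assms]
  by (rule has_integral_window_sum_indicator)

lemma has_integral_loop_indicator_right:
  assumes "n \<le> m"
  shows "((\<lambda>x. loop_indicator (greedy_digit x) n m) has_integral walk_prob (Suc (m - n)) 0) {0..1}"
proof (cases n)
  case 0
  \<comment> \<open>On [0,1] the first digit is 1, so a loop starting at 0 means the next m digits sum to -1.\<close>
  have split: "(\<Sum>j=0..m. greedy_digit x j) = greedy_digit x 0 + (\<Sum>j<m. greedy_digit x (Suc j))" for x
    unfolding atLeast0AtMost lessThan_Suc_atMost[symmetric] by (rule sum.lessThan_Suc_shift)
  have "((\<lambda>x. loop_indicator (greedy_digit x) n m) has_integral 2 * walk_prob m (-1) / 2) {0..1}"
    by (rule has_integral_digit_tail_right[OF has_integral_prefix_sum_indicator])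
      (auto simp: loop_indicator_def 0 split)
  moreover have "walk_prob m (-1) = walk_prob (Suc m) 0"
    using walk_prob_uminus[of m 1] by (simp add: walk_prob.simps(2))
  ultimately show ?thesis
    using 0 by simp
next
  case (Suc n')
  have "((\<lambda>x. loop_indicator (greedy_digit x) n m) has_integral 2 * walk_prob (Suc (m - n)) 0 / 2) {0..1}"
    by (rule has_integral_digit_tail_right[where \<phi> = "\<lambda>d. if (\<Sum>j<Suc (m - n). d (n' + j)) = 0 then 1 else 0",
          OF has_integral_window_sum_indicator])
      (unfold loop_indicator_def sum_atLeastAtMost_eq_sum_lessThan[OF assms], simp add: Suc)
  then show ?thesis
    by simp
qed

definition mean_loop_mass :: "nat \<Rightarrow> real" where
  "mean_loop_mass m = (\<Sum>n\<le>m. u n m * walk_prob (Suc (m - n)) 0)"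

lemma has_integral_loop_mass_right:
  "((\<lambda>x. loop_mass (greedy_digit x) m) has_integral mean_loop_mass m) {0..1}"
  unfolding loop_mass_def mean_loop_mass_def
  by (rule has_integral_sum) (auto intro!: has_integral_mult_right has_integral_loop_indicator_right)

lemma has_integral_loop_mass:
  "((\<lambda>x. loop_mass (greedy_digit x) m) has_integral 2 * mean_loop_mass m) {-1..1}"
proof -
  have "((\<lambda>x. loop_mass (greedy_digit x) m)
      has_integral (\<Sum>n\<le>m. u n m * (2 * walk_prob (Suc (m - n)) 0))) {-1..1}"
    unfolding loop_mass_def
    by (rule has_integral_sum) (auto intro!: has_integral_mult_right has_integral_loop_indicator)
  then show ?thesis
    by (simp add: mean_loop_mass_def sum_distrib_left mult.left_commute)
qed

section \<open>Return probabilities of the simple random walk\<close>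

definition walk_count :: "nat \<Rightarrow> real \<Rightarrow> real" where
  "walk_count k c = (\<Sum>i\<le>k. if c = 2 * real i - real k then real (k choose i) else 0)"

lemma walk_count_Suc: "walk_count (Suc k) c = walk_count k (c - 1) + walk_count k (c + 1)"
proof -
  define f where "f i = (if c = 2 * real i - real (Suc k) then real (Suc k choose i) else 0)" for i
  define g where "g i = (if c - 1 = 2 * real i - real k then real (k choose i) else 0)" for i
  define h where "h i = (if c + 1 = 2 * real i - real k then real (k choose i) else 0)" for i
  have "walk_count (Suc k) c = f 0 + (\<Sum>i\<le>k. f (Suc i))"
    unfolding walk_count_def f_def by (rule sum.atMost_Suc_shift)
  moreover have "f (Suc i) = g i + h (Suc i)" for i
  proof -
    have "(c = 2 * real (Suc i) - real (Suc k)) = (c - 1 = 2 * real i - real k)"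
      "(c = 2 * real (Suc i) - real (Suc k)) = (c + 1 = 2 * real (Suc i) - real k)"
      by auto
    then show ?thesis
      unfolding f_def g_def h_def by simp
  qed
  ultimately have "walk_count (Suc k) c = (\<Sum>i\<le>k. g i) + (f 0 + (\<Sum>i\<le>k. h (Suc i)))"
    by (simp add: sum.distrib)
  moreover have "f 0 + (\<Sum>i\<le>k. h (Suc i)) = (\<Sum>i\<le>k. h i)"
  proof -
    have "(\<Sum>i\<le>Suc k. h i) = h 0 + (\<Sum>i\<le>k. h (Suc i))"
      by (rule sum.atMost_Suc_shift)
    moreover have "(\<Sum>i\<le>Suc k. h i) = (\<Sum>i\<le>k. h i)" "h 0 = f 0"
      by (auto simp: h_def f_def)
    ultimately show ?thesis
      by simp
  qed
  ultimately show ?thesis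
    by (simp add: walk_count_def g_def h_def)
qed

lemma walk_prob_eq_walk_count: "walk_prob k c = walk_count k c / 2 ^ k"
proof (induction k arbitrary: c)
  case 0
  then show ?case
    by (simp add: walk_count_def)
next
  case (Suc k)
  show ?case
    using Suc.IH[of "c - 1"] Suc.IH[of "c + 1"] by (simp add: walk_prob.simps(2) walk_count_Suc field_simps)
qed

lemma walk_prob_even_zero: "walk_prob (2 * j) 0 = real ((2 * j) choose j) / 4 ^ j"
proof -
  have "walk_count (2 * j) 0 = (\<Sum>i\<le>2 * j. if i = j then real ((2 * j) choose j) else 0)"
    unfolding walk_count_def
  proof (rule sum.cong[OF refl])
    fix i
    have "((0 :: real) = 2 * real i - real (2 * j)) = (i = j)"
      by auto
    then show "(if 0 = 2 * real i - real (2 * j) then real (2 * j choose i) else 0)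
        = (if i = j then real (2 * j choose j) else 0)"
      by auto
  qed
  then show ?thesis
    by (simp add: walk_prob_eq_walk_count power_mult)
qed

lemma walk_prob_odd_zero: "walk_prob (Suc (2 * j)) 0 = 0"
proof -
  have "(0 :: real) \<noteq> 2 * real i - real (Suc (2 * j))" for i
  proof
    assume "(0 :: real) = 2 * real i - real (Suc (2 * j))"
    then have "2 * i = Suc (2 * j)"
      by linarith
    then show False
      by presburger
  qed
  then show ?thesis
    by (simp add: walk_prob_eq_walk_count walk_count_def)
qed

lemma central_binomial_eq_gbinomial:
  "real ((2 * j) choose j) / 4 ^ j = (-1) ^ j * ((- 1 / 2 :: real) gchoose j)"
proof -
  have "real ((2 * j) choose j) = fact (2 * j) / (fact j * fact j)"
    using binomial_fact[of j "2 * j"] by simp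
  also have "\<dots> = 4 ^ j * pochhammer (1 / 2) j / fact j"
    by (simp add: fact_double power_mult)
  finally have "real ((2 * j) choose j) / 4 ^ j = pochhammer (1 / 2) j / fact j"
    by simp
  moreover have "(-1) ^ j * ((- 1 / 2 :: real) gchoose j) = pochhammer (1 / 2) j / fact j"
    by (simp add: gbinomial_pochhammer power_mult_distrib[symmetric])
  ultimately show ?thesis
    by simp
qed

lemma walk_prob_zero_sums: "(\<lambda>k. walk_prob k 0 / 2 ^ k) sums (2 / sqrt 3)"
proof -
  have "(\<lambda>j. ((- 1 / 2 :: real) gchoose j) * (- 1 / 4) ^ j) sums (1 + (- 1 / 4)) powr (- 1 / 2)"
    by (rule gen_binomial_real) simp
  moreover have "(1 + (- 1 / 4 :: real)) powr (- 1 / 2) = 2 / sqrt 3"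
  proof -
    have "(1 + (- 1 / 4 :: real)) powr (- 1 / 2) = inverse ((3 / 4) powr (1 / 2))"
      by (simp add: powr_minus)
    also have "(3 / 4 :: real) powr (1 / 2) = sqrt 3 / 2"
      by (simp add: powr_half_sqrt real_sqrt_divide)
    finally show ?thesis
      by simp
  qed
  moreover have "walk_prob (2 * j) 0 / 2 ^ (2 * j) = ((- 1 / 2 :: real) gchoose j) * (- 1 / 4) ^ j" for j
  proof -
    have "walk_prob (2 * j) 0 / 2 ^ (2 * j) = (-1) ^ j * ((- 1 / 2 :: real) gchoose j) * (1 / 4) ^ j"
      by (simp add: walk_prob_even_zero central_binomial_eq_gbinomial power_mult power_one_over)
    then show ?thesis
      by (simp add: power_mult_distrib[symmetric] mult.commute mult.left_commute)
  qed
  ultimately have "(\<lambda>j. walk_prob (2 * j) 0 / 2 ^ (2 * j)) sums (2 / sqrt 3)"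
    by simp
  moreover have "strict_mono (\<lambda>j :: nat. 2 * j)"
    by (simp add: strict_mono_def)
  moreover have "walk_prob n 0 / 2 ^ n = 0" if "n \<notin> range (\<lambda>j :: nat. 2 * j)" for n
  proof -
    have "odd n"
      using that by auto
    then obtain j where "n = Suc (2 * j)"
      using oddE by (metis Suc_eq_plus1)
    then show ?thesis
      by (simp add: walk_prob_odd_zero)
  qed
  ultimately show ?thesis
    using sums_mono_reindex[of "\<lambda>j. 2 * j" "\<lambda>k. walk_prob k 0 / 2 ^ k"] by simp
qed

lemma mean_loop_mass_eq: "mean_loop_mass m = (\<Sum>i\<le>m. walk_prob (Suc i) 0) / 2 ^ Suc m"
proof -
  have "mean_loop_mass m = (\<Sum>n\<le>m. walk_prob (Suc (m - n)) 0) / 2 ^ Suc m"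
    by (simp add: mean_loop_mass_def u_def sum_divide_distrib)
  also have "(\<Sum>n\<le>m. walk_prob (Suc (m - n)) 0) = (\<Sum>i\<le>m. walk_prob (Suc i) 0)"
    using sum.atLeastAtMost_rev[of "\<lambda>n. walk_prob (Suc (m - n)) 0" 0 m] by (simp add: atLeast0AtMost)
  finally show ?thesis .
qed

lemma sum_mean_loop_mass:
  "(\<Sum>m<M. mean_loop_mass m)
    = 2 * (\<Sum>i<M. walk_prob (Suc i) 0 / 2 ^ Suc i) - (\<Sum>i<M. walk_prob (Suc i) 0) / 2 ^ M"
proof (induction M)
  case (Suc M)
  have mean_M: "mean_loop_mass M = ((\<Sum>i<M. walk_prob (Suc i) 0) + walk_prob (Suc M) 0) / 2 ^ Suc M"
    by (simp add: mean_loop_mass_eq lessThan_Suc_atMost[symmetric])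
  show ?case
    by (simp only: sum.lessThan_Suc Suc.IH mean_M) (simp add: field_simps)
qed simp

lemma mean_loop_mass_sums: "mean_loop_mass sums (4 / sqrt 3 - 2)"
proof -
  have "(\<lambda>i. walk_prob (Suc i) 0 / 2 ^ Suc i) sums (2 / sqrt 3 - 1)"
    using walk_prob_zero_sums sums_Suc_iff[of "\<lambda>k. walk_prob k 0 / 2 ^ k"] by simp
  then have returns: "(\<lambda>M. \<Sum>i<M. walk_prob (Suc i) 0 / 2 ^ Suc i) \<longlonglongrightarrow> 2 / sqrt 3 - 1"
    by (simp add: sums_def)
  have "(\<lambda>M. (\<Sum>i<M. walk_prob (Suc i) 0) / 2 ^ M) \<longlonglongrightarrow> 0"
  proof (rule Lim_null_comparison)
    have "(\<Sum>i<M. walk_prob (Suc i) 0) \<le> real M" "0 \<le> (\<Sum>i<M. walk_prob (Suc i) 0)" for M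
      using sum_mono[of "{..<M}" "\<lambda>i. walk_prob (Suc i) 0" "\<lambda>_. 1"] walk_prob_bounds
      by (auto intro: sum_nonneg)
    then show "\<forall>\<^sub>F M in sequentially. norm ((\<Sum>i<M. walk_prob (Suc i) 0) / 2 ^ M) \<le> real M / 2 ^ M"
      by (auto intro!: always_eventually divide_right_mono)
  qed real_asymp
  with returns have "(\<lambda>M. \<Sum>m<M. mean_loop_mass m) \<longlonglongrightarrow> 2 * (2 / sqrt 3 - 1) - 0"
    unfolding sum_mean_loop_mass by (intro tendsto_intros)
  then show ?thesis
    by (simp add: sums_def algebra_simps)
qed

lemma has_integral_loop_series_right:
  "((\<lambda>x. loop_series (greedy_digit x)) has_integral (4 / sqrt 3 - 2)) {0..1}"
  unfolding loop_series_def
  by (rule has_integral_suminf_nonneg[OF has_integral_loop_mass_right _ _ mean_loop_mass_sums])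
    (simp_all add: loop_mass_nonneg summable_loop_mass[OF greedy_digit_pm])

lemma integrable_loop_series: "(\<lambda>x. loop_series (greedy_digit x)) integrable_on {-1..1}"
  unfolding loop_series_def
  by (rule has_integral_integrable[OF has_integral_suminf_nonneg[OF has_integral_loop_mass _ _
          sums_mult[OF mean_loop_mass_sums]]])
    (simp_all add: loop_mass_nonneg summable_loop_mass[OF greedy_digit_pm])

theorem mainTheorem5:
  shows "(U has_integral (4 / sqrt 3 - 2)) {0..1}
         \<and> U (1/3) = 2/3
         \<and> esssup (lebesgue_on {-1..1}) (\<lambda>x. ereal (U x)) = ereal (2/3)"
proof -
  have U_eq: "U x = loop_series (greedy_digit x)" if "x \<in> {-1..1} - dyadic" for x
    using that by (simp add: U_eq_loop_series digits_eq_greedy_digit)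
  have "(U has_integral (4 / sqrt 3 - 2)) {0..1}"
    by (rule has_integral_spike[OF negligible_dyadic _ has_integral_loop_series_right]) (auto simp: U_eq)
  moreover have "esssup (lebesgue_on {-1..1}) (\<lambda>x. ereal (U x)) = ereal (2 / 3)"
  proof (rule esssup_lebesgue_on_eqI[OF _ _ negligible_dyadic])
    have "U integrable_on {-1..1}"
      by (rule integrable_spike[OF integrable_loop_series negligible_dyadic]) (auto simp: U_eq)
    then show "U \<in> borel_measurable (lebesgue_on {-1..1})"
      by (rule integrable_imp_measurable)
    show "U x \<le> 2 / 3" if "x \<in> {-1..1} - dyadic" for x
      using U_eq[OF that] loop_series_le[OF greedy_digit_pm] by simp
    show "\<exists>a b. a < b \<and> {a..b} \<subseteq> {-1..1} \<and> (\<forall>x \<in> {a..b} - dyadic. z < U x)"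
      if z: "z < 2 / 3" for z
    proof -
      obtain a b where "a < b" "{a..b} \<subseteq> {-1..1}"
        "\<And>x. x \<in> {a..b} \<Longrightarrow> z < loop_series (greedy_digit x)"
        using loop_series_near_third[OF z] by blast
      then show ?thesis
        using U_eq by (intro exI[of _ a] exI[of _ b]) auto
    qed
  qed simp
  ultimately show ?thesis
    using U_third by blast
qed

end
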